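(* Let $F=F_2$ be the free group on $x,y$, $F^{(1)}=[F,F]$, $F^{(2)}=[F^{(1)},F^{(1)}]$, let $w\in F^{(1)}\setminus F^{(2)}$, and suppose $\Phi_w(1,i)\neq 0$, where $i^2=-1$. Then $-\mathrm{id}$ lies in the image of the word map $w:\mathrm{SL}(2,\mathbb{C})^2\to\mathrm{SL}(2,\mathbb{C})$.
   Context: Write $[a,b]=aba^{-1}b^{-1}$ and $w_{n,m}=[x^n,y^m]$ for nonzero integers $n,m$. Every $w\in F^{(1)}$ has a unique shortest expression $w=\prod_{j=1}^r w_{n_j,m_j}^{s_j}$ with $s_j\ne0$ (the $w_{n,m}$ freely generate $F^{(1)}$). $\mathrm{Supp}(w)$ is the set of pairs $(n,m)$ with $w_{n,m}$ occurring, and $R_w(n,m)$ is the sum of the exponents of all occurrences of $w_{n,m}$. Define $$\Phi_w(\lambda,\mu)=\sum_{(\alpha,\beta)\in \mathrm{Supp}(w)} R_w(\alpha,\beta)\,\mathrm{sgn}(\alpha)\,(1-\mu^{2\beta})\,\lambda^{\alpha-|\alpha|+1}\,\frac{\lambda^{2|\alpha|}-1}{\lambda^2-1},$$ where $\frac{\lambda^{2|\alpha|}-1}{\lambda^2-1}=1+\lambda^2+\dots+\lambda^{2(|\alpha|-1)}$ is a polynomial, so that $\Phi_w(1,i)$ is defined. *)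

theory Defs
  imports "HOL-Algebra.Generated_Groups" "HOL-Analysis.Analysis"
begin

text \<open>A letter is a pair (g, e): g = False means x, g = True means y;
  e = True means the inverse letter.\<close>
type_synonym letter = "bool \<times> bool"

definition inv_letter :: "letter \<Rightarrow> letter" where
  "inv_letter l = (fst l, \<not> snd l)"

definition reduced :: "letter list \<Rightarrow> bool" where
  "reduced xs \<longleftrightarrow> (\<forall>i. Suc i < length xs \<longrightarrow> xs ! Suc i \<noteq> inv_letter (xs ! i))"

fun reduce :: "letter list \<Rightarrow> letter list" where
  "reduce [] = []"
| "reduce (a # xs) =
     (case reduce xs of
        [] \<Rightarrow> [a]
      | b # ys \<Rightarrow> (if b = inv_letter a then ys else a # b # ys))"

definition free_group2 :: "letter list monoid" where
  "free_group2 = \<lparr>carrier = {xs. reduced xs}, monoid.mult = (\<lambda>xs ys. reduce (xs @ ys)), one = []\<rparr>"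

definition gen_x :: "letter list" where "gen_x = [(False, False)]"
definition gen_y :: "letter list" where "gen_y = [(True, False)]"

definition commF :: "letter list \<Rightarrow> letter list \<Rightarrow> letter list" where
  "commF a b = a \<otimes>\<^bsub>free_group2\<^esub> b \<otimes>\<^bsub>free_group2\<^esub> inv\<^bsub>free_group2\<^esub> a
                 \<otimes>\<^bsub>free_group2\<^esub> inv\<^bsub>free_group2\<^esub> b"

definition wnm :: "int \<Rightarrow> int \<Rightarrow> letter list" where
  "wnm n m = commF (gen_x [^]\<^bsub>free_group2\<^esub> n) (gen_y [^]\<^bsub>free_group2\<^esub> m)"

text \<open>An expression is a list of ((n_j, m_j), s_j) standing for the product of
  w_{n_j,m_j}^{s_j}, with all entries nonzero.\<close>
definition expr_ok :: "((int \<times> int) \<times> int) list \<Rightarrow> bool" where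
  "expr_ok e \<longleftrightarrow> (\<forall>((n, m), s) \<in> set e. n \<noteq> 0 \<and> m \<noteq> 0 \<and> s \<noteq> 0)"

definition expr_val :: "((int \<times> int) \<times> int) list \<Rightarrow> letter list" where
  "expr_val e = foldr (\<lambda>((n, m), s) acc. (wnm n m [^]\<^bsub>free_group2\<^esub> s) \<otimes>\<^bsub>free_group2\<^esub> acc)
                      e \<one>\<^bsub>free_group2\<^esub>"

definition shortest_expr :: "letter list \<Rightarrow> ((int \<times> int) \<times> int) list" where
  "shortest_expr w = (SOME e. expr_ok e \<and> expr_val e = w \<and>
      (\<forall>e'. expr_ok e' \<and> expr_val e' = w \<longrightarrow> length e \<le> length e'))"

definition Supp :: "letter list \<Rightarrow> (int \<times> int) set" where
  "Supp w = fst ` set (shortest_expr w)"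

definition R :: "letter list \<Rightarrow> int \<Rightarrow> int \<Rightarrow> int" where
  "R w n m = sum_list (map snd (filter (\<lambda>p. fst p = (n, m)) (shortest_expr w)))"

definition Phi :: "letter list \<Rightarrow> complex \<Rightarrow> complex \<Rightarrow> complex" where
  "Phi w lam mu = (\<Sum>(\<alpha>, \<beta>) \<in> Supp w.
      of_int (R w \<alpha> \<beta>) * of_int (sgn \<alpha>) * (1 - mu powi (2 * \<beta>))
      * lam powi (\<alpha> - \<bar>\<alpha>\<bar> + 1) * (\<Sum>k < nat \<bar>\<alpha>\<bar>. lam ^ (2 * k)))"

definition SL2 :: "(complex^2^2) set" where
  "SL2 = {A. det A = 1}"

definition letter_mat :: "complex^2^2 \<Rightarrow> complex^2^2 \<Rightarrow> letter \<Rightarrow> complex^2^2" where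
  "letter_mat A B l = (let M = (if fst l then B else A) in if snd l then matrix_inv M else M)"

definition eval_word :: "letter list \<Rightarrow> complex^2^2 \<Rightarrow> complex^2^2 \<Rightarrow> complex^2^2" where
  "eval_word w A B = foldr (\<lambda>l M. letter_mat A B l ** M) w (mat 1)"

end

theory Submission
  imports Defs
begin

text \<open>
  The commutators \<open>w\<^sub>n\<^sub>,\<^sub>m\<close> generate a normal subgroup of \<open>F\<close> modulo which \<open>x\<close> and \<open>y\<close>
  commute, so every \<open>w \<in> F\<^sup>(\<^sup>1\<^sup>)\<close> is a product of them. Send \<open>x\<close> to \<open>diag(\<lambda>, \<lambda>\<^sup>-\<^sup>1)\<close> and
  \<open>y\<close> to the quarter turn \<open>J\<close>. Conjugation by \<open>J\<close> inverts diagonal matrices, so \<open>w\<^sub>n\<^sub>,\<^sub>m\<close>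
  maps to \<open>1\<close> for even \<open>m\<close> and to \<open>diag(\<lambda>\<^sup>2\<^sup>n, \<lambda>\<^sup>-\<^sup>2\<^sup>n)\<close> for odd \<open>m\<close>; hence \<open>w\<close> maps to
  \<open>diag(\<lambda>\<^sup>2\<^sup>N, \<lambda>\<^sup>-\<^sup>2\<^sup>N)\<close>, where \<open>N\<close> is the sum of \<open>n\<^sub>j s\<^sub>j\<close> over the factors with odd \<open>m\<^sub>j\<close>.
  At \<open>(1, i)\<close> every summand of \<open>\<Phi>\<^sub>w\<close> collapses to \<open>2 R\<^sub>w(\<alpha>,\<beta>) \<alpha>\<close> for odd \<open>\<beta>\<close> and to \<open>0\<close> otherwise,
  so \<open>\<Phi>\<^sub>w(1, i) = 2N \<noteq> 0\<close>, and \<open>\<lambda> = exp(\<pi>i/2N)\<close> sends \<open>w\<close> to \<open>-1\<close>.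
\<close>

section \<open>Reduced words form a group\<close>

lemma inv_letter_inv_letter [simp]: "inv_letter (inv_letter a) = a"
  by (simp add: inv_letter_def)

definition cancel_cons :: "letter \<Rightarrow> letter list \<Rightarrow> letter list" where
  "cancel_cons a r = (case r of [] \<Rightarrow> [a] | b # ys \<Rightarrow> (if b = inv_letter a then ys else a # b # ys))"

lemma reduce_Cons_cancel_cons: "reduce (a # xs) = cancel_cons a (reduce xs)"
  by (simp add: cancel_cons_def)

lemma reduced_Nil [simp]: "reduced []"
  and reduced_singleton [simp]: "reduced [a]"
  by (simp_all add: reduced_def)

lemma reduced_Cons_Cons_iff: "reduced (a # b # t) \<longleftrightarrow> b \<noteq> inv_letter a \<and> reduced (b # t)"
  unfolding reduced_def
proof (intro iffI conjI allI impI)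
  assume r: "\<forall>i. Suc i < length (a # b # t) \<longrightarrow> (a # b # t) ! Suc i \<noteq> inv_letter ((a # b # t) ! i)"
  from r[rule_format, of 0] show "b \<noteq> inv_letter a" by simp
  fix i assume "Suc i < length (b # t)"
  with r[rule_format, of "Suc i"] show "(b # t) ! Suc i \<noteq> inv_letter ((b # t) ! i)" by simp
next
  fix i
  assume "b \<noteq> inv_letter a \<and> (\<forall>i. Suc i < length (b # t) \<longrightarrow> (b # t) ! Suc i \<noteq> inv_letter ((b # t) ! i))"
    and "Suc i < length (a # b # t)"
  then show "(a # b # t) ! Suc i \<noteq> inv_letter ((a # b # t) ! i)"
    by (cases i) auto
qed

lemma reduced_Cons_tail: "reduced (a # t) \<Longrightarrow> reduced t"
  by (cases t) (auto simp: reduced_Cons_Cons_iff)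

lemma reduced_cancel_cons: "reduced r \<Longrightarrow> reduced (cancel_cons a r)"
  by (cases r) (auto simp: cancel_cons_def reduced_Cons_Cons_iff dest: reduced_Cons_tail)

lemma reduced_reduce: "reduced (reduce xs)"
  by (induction xs) (auto simp: reduce_Cons_cancel_cons reduced_cancel_cons simp del: reduce.simps(2))

lemma reduce_reduced: "reduced xs \<Longrightarrow> reduce xs = xs"
proof (induction xs)
  case (Cons a xs)
  then show ?case
    by (cases xs) (auto simp: reduce_Cons_cancel_cons cancel_cons_def reduced_Cons_Cons_iff
        dest: reduced_Cons_tail simp del: reduce.simps(2))
qed simp

lemma reduce_reduce [simp]: "reduce (reduce xs) = reduce xs"
  by (simp add: reduce_reduced reduced_reduce)

lemma reduce_append_reduce_right: "reduce (xs @ reduce ys) = reduce (xs @ ys)"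
  by (induction xs) (auto simp: reduce_Cons_cancel_cons simp del: reduce.simps(2))

lemma cancel_cons_inv_letter: "reduced r \<Longrightarrow> cancel_cons a (cancel_cons (inv_letter a) r) = r"
  by (cases r rule: remdups_adj.cases)
     (auto simp: cancel_cons_def reduced_Cons_Cons_iff)

lemma reduce_Cons_Cons_inv_letter: "reduce (a # inv_letter a # zs) = reduce zs"
  by (simp only: reduce_Cons_cancel_cons cancel_cons_inv_letter[OF reduced_reduce])

lemma reduce_Cons_append_cancel_cons: "reduce (a # r @ ys) = reduce (cancel_cons a r @ ys)"
proof (cases r)
  case (Cons b t)
  then show ?thesis
    using reduce_Cons_Cons_inv_letter[of a "t @ ys"] by (auto simp: cancel_cons_def simp del: reduce.simps)
qed (simp add: cancel_cons_def)

lemma reduce_append_reduce_left: "reduce (reduce xs @ ys) = reduce (xs @ ys)"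
proof (induction xs)
  case (Cons a xs)
  have "reduce ((a # xs) @ ys) = cancel_cons a (reduce (reduce xs @ ys))"
    using Cons by (simp only: append_Cons reduce_Cons_cancel_cons)
  also have "\<dots> = reduce (a # reduce xs @ ys)"
    by (simp only: reduce_Cons_cancel_cons)
  also have "\<dots> = reduce (cancel_cons a (reduce xs) @ ys)"
    by (rule reduce_Cons_append_cancel_cons)
  finally show ?case by (simp only: reduce_Cons_cancel_cons)
qed simp

definition inv_word :: "letter list \<Rightarrow> letter list" where
  "inv_word xs = rev (map inv_letter xs)"

lemma reduce_append_inv_word: "reduce (inv_word xs @ xs) = []"
proof -
  have "reduce (inv_word xs @ xs @ q) = reduce q" for q
  proof (induction xs arbitrary: q rule: rev_induct)
    case (snoc a xs)
    have "reduce (inv_word (xs @ [a]) @ (xs @ [a]) @ q)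
        = cancel_cons (inv_letter a) (reduce (inv_word xs @ xs @ a # q))"
      by (simp add: inv_word_def reduce_Cons_cancel_cons del: reduce.simps(2))
    also have "\<dots> = reduce (inv_letter a # inv_letter (inv_letter a) # q)"
      by (simp only: snoc inv_letter_inv_letter reduce_Cons_cancel_cons)
    finally show ?case by (simp only: reduce_Cons_Cons_inv_letter)
  qed (simp add: inv_word_def)
  from this[of "[]"] show ?thesis by simp
qed

lemma group_free_group2: "group free_group2"
proof (rule groupI)
  fix x
  assume x: "x \<in> carrier free_group2"
  show "\<exists>y\<in>carrier free_group2. y \<otimes>\<^bsub>free_group2\<^esub> x = \<one>\<^bsub>free_group2\<^esub>"
    by (rule bexI[of _ "reduce (inv_word x)"])
       (simp_all add: free_group2_def reduced_reduce reduce_append_reduce_left reduce_append_inv_word)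
  show "\<one>\<^bsub>free_group2\<^esub> \<otimes>\<^bsub>free_group2\<^esub> x = x"
    using x by (simp add: free_group2_def reduce_reduced)
qed (simp_all add: free_group2_def reduced_reduce reduce_append_reduce_left reduce_append_reduce_right)

interpretation F: group free_group2
  by (rule group_free_group2)

lemma carrier_free_group2: "carrier free_group2 = {xs. reduced xs}"
  and mult_free_group2: "x \<otimes>\<^bsub>free_group2\<^esub> y = reduce (x @ y)"
  and one_free_group2: "\<one>\<^bsub>free_group2\<^esub> = []"
  by (simp_all add: free_group2_def)

lemma gen_x_carrier: "gen_x \<in> carrier free_group2"
  and gen_y_carrier: "gen_y \<in> carrier free_group2"
  by (simp_all add: carrier_free_group2 gen_x_def gen_y_def)

lemma inv_free_group2_singleton: "inv\<^bsub>free_group2\<^esub> [a] = [inv_letter a]"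
  using reduce_Cons_Cons_inv_letter[of "inv_letter a" "[]"]
  by (intro F.inv_equality) (simp_all add: carrier_free_group2 mult_free_group2 one_free_group2)

lemma carrier_free_group2_generate: "carrier free_group2 = generate free_group2 {gen_x, gen_y}"
proof
  show "generate free_group2 {gen_x, gen_y} \<subseteq> carrier free_group2"
    by (simp add: F.generate_incl gen_x_carrier gen_y_carrier)
  have letter: "[(g, e)] \<in> generate free_group2 {gen_x, gen_y}" for g e
  proof -
    have gen: "[(g, False)] \<in> generate free_group2 {gen_x, gen_y}"
      by (cases g) (auto simp: gen_x_def gen_y_def intro: generate.incl)
    show ?thesis
    proof (cases e)
      case True
      then have "[(g, e)] = inv\<^bsub>free_group2\<^esub> [(g, False)]"
        by (simp add: inv_free_group2_singleton inv_letter_def)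
      then show ?thesis
        using F.generate_m_inv_closed[OF _ gen] gen_x_carrier gen_y_carrier by simp
    qed (use gen in simp)
  qed
  show "carrier free_group2 \<subseteq> generate free_group2 {gen_x, gen_y}"
  proof
    fix l assume "l \<in> carrier free_group2"
    then have "reduced l" by (simp add: carrier_free_group2)
    then show "l \<in> generate free_group2 {gen_x, gen_y}"
    proof (induction l)
      case Nil then show ?case using generate.one[of free_group2] by (simp add: one_free_group2)
    next
      case (Cons a t)
      have "a # t = [a] \<otimes>\<^bsub>free_group2\<^esub> t"
        using reduce_reduced[OF Cons.prems] by (simp add: mult_free_group2)
      then show ?case
        using generate.eng[OF letter Cons.IH[OF reduced_Cons_tail[OF Cons.prems]]] by (cases a) simp
    qed
  qed
qed

section \<open>Derived subgroups from generators\<close>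

definition commutator :: "('a, 'b) monoid_scheme \<Rightarrow> 'a \<Rightarrow> 'a \<Rightarrow> 'a" where
  "commutator G a b = a \<otimes>\<^bsub>G\<^esub> b \<otimes>\<^bsub>G\<^esub> inv\<^bsub>G\<^esub> a \<otimes>\<^bsub>G\<^esub> inv\<^bsub>G\<^esub> b"

context group
begin

lemma mult_inv_cancel_left [simp]: "x \<in> carrier G \<Longrightarrow> y \<in> carrier G \<Longrightarrow> x \<otimes> (inv x \<otimes> y) = y"
  and inv_mult_cancel_left [simp]: "x \<in> carrier G \<Longrightarrow> y \<in> carrier G \<Longrightarrow> inv x \<otimes> (x \<otimes> y) = y"
  by (simp_all flip: m_assoc)

lemma commutator_closed [simp]:
  "a \<in> carrier G \<Longrightarrow> b \<in> carrier G \<Longrightarrow> commutator G a b \<in> carrier G"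
  by (simp add: commutator_def)

lemma conj_generate_closed:
  assumes W: "W \<subseteq> carrier G" and g: "g \<in> carrier G"
    and conj_W: "\<And>w. w \<in> W \<Longrightarrow> g \<otimes> w \<otimes> inv g \<in> generate G W"
    and u: "u \<in> generate G W"
  shows "g \<otimes> u \<otimes> inv g \<in> generate G W"
  using u
proof (induction rule: generate.induct)
  case one then show ?case using g by (simp add: generate.one)
next
  case (incl h) then show ?case by (rule conj_W)
next
  case (inv h)
  have "h \<in> carrier G" using inv W by auto
  then have "g \<otimes> inv h \<otimes> inv g = inv (g \<otimes> h \<otimes> inv g)"
    using g by (simp add: m_assoc inv_mult_group)
  then show ?case using generate_m_inv_closed[OF W conj_W[OF inv]] by simp
next
  case (eng h1 h2)
  have "h1 \<in> carrier G" "h2 \<in> carrier G" using eng generate_in_carrier[OF W] by auto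
  then have "g \<otimes> (h1 \<otimes> h2) \<otimes> inv g = (g \<otimes> h1 \<otimes> inv g) \<otimes> (g \<otimes> h2 \<otimes> inv g)"
    using g by (simp add: m_assoc)
  then show ?case using generate.eng[OF eng.IH] by simp
qed

lemma generate_normal_if_conj_generators:
  assumes W: "W \<subseteq> carrier G" and S: "S \<subseteq> carrier G" and gen: "carrier G = generate G S"
    and conj: "\<And>s w. s \<in> S \<Longrightarrow> w \<in> W \<Longrightarrow>
      s \<otimes> w \<otimes> inv s \<in> generate G W \<and> inv s \<otimes> w \<otimes> s \<in> generate G W"
  shows "generate G W \<lhd> G"
proof -
  define H where "H = generate G W"
  define T where "T = {g \<in> carrier G. \<forall>u\<in>H. g \<otimes> u \<otimes> inv g \<in> H \<and> inv g \<otimes> u \<otimes> g \<in> H}"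
  have H: "subgroup H G" unfolding H_def by (rule generate_is_subgroup[OF W])
  have "subgroup T G"
  proof (rule subgroupI)
    show "T \<subseteq> carrier G" "T \<noteq> {}"
      using subgroup.mem_carrier[OF H] by (auto simp: T_def intro!: exI[of _ \<one>])
    show "inv g \<in> T" if "g \<in> T" for g
      using that by (auto simp: T_def)
    show "g \<otimes> h \<in> T" if "g \<in> T" "h \<in> T" for g h
    proof -
      have c: "g \<in> carrier G" "h \<in> carrier G" using that by (auto simp: T_def)
      have "g \<otimes> h \<otimes> u \<otimes> inv (g \<otimes> h) = g \<otimes> (h \<otimes> u \<otimes> inv h) \<otimes> inv g"
        "inv (g \<otimes> h) \<otimes> u \<otimes> (g \<otimes> h) = inv h \<otimes> (inv g \<otimes> u \<otimes> g) \<otimes> h"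
        if "u \<in> carrier G" for u
        using c that by (simp_all add: m_assoc inv_mult_group)
      then show ?thesis
        using that c subgroup.mem_carrier[OF H] by (auto simp: T_def)
    qed
  qed
  moreover have "s \<in> T" if s: "s \<in> S" for s
  proof -
    have sc: "s \<in> carrier G" using s S by auto
    have "s \<otimes> u \<otimes> inv s \<in> H" "inv s \<otimes> u \<otimes> inv (inv s) \<in> H" if "u \<in> H" for u
      using conj_generate_closed[OF W sc] conj_generate_closed[OF W inv_closed[OF sc]] conj[OF s] that
      by (auto simp: H_def sc)
    then show ?thesis using sc by (simp add: T_def)
  qed
  then have "S \<subseteq> T" by blast
  ultimately have "carrier G \<subseteq> T"
    unfolding gen by (metis generate_subgroup_incl)
  then show ?thesis
    using H by (intro normal_invI) (auto simp: T_def H_def)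
qed

lemma commutator_mod_normal_subgroup:
  assumes N: "N \<lhd> G" and g: "g \<in> carrier G"
  shows "subgroup {h \<in> carrier G. commutator G g h \<in> N} G"
proof (rule subgroupI)
  interpret N: normal N G by (rule N)
  show "{h \<in> carrier G. commutator G g h \<in> N} \<subseteq> carrier G"
    "{h \<in> carrier G. commutator G g h \<in> N} \<noteq> {}"
    using g by (auto simp: commutator_def intro!: exI[of _ \<one>])
  fix h h'
  assume h: "h \<in> {h \<in> carrier G. commutator G g h \<in> N}"
    and h': "h' \<in> {h \<in> carrier G. commutator G g h \<in> N}"
  then have c: "h \<in> carrier G" "h' \<in> carrier G" by auto
  have "commutator G g (inv h) = inv h \<otimes> inv (commutator G g h) \<otimes> inv (inv h)"
    using g c by (simp add: commutator_def m_assoc inv_mult_group)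
  moreover have "inv h \<otimes> inv (commutator G g h) \<otimes> inv (inv h) \<in> N"
    using h c by (intro N.inv_op_closed2 N.m_inv_closed) auto
  ultimately show "inv h \<in> {h \<in> carrier G. commutator G g h \<in> N}"
    using c by simp
  have "commutator G g (h \<otimes> h') = commutator G g h \<otimes> (h \<otimes> commutator G g h' \<otimes> inv h)"
    using g c by (simp add: commutator_def m_assoc inv_mult_group)
  then show "h \<otimes> h' \<in> {h \<in> carrier G. commutator G g h \<in> N}"
    using h h' c N.inv_op_closed2 by auto
qed

lemma derived_subset_if_generators_commute:
  assumes N: "N \<lhd> G" and S: "S \<subseteq> carrier G" and gen: "carrier G = generate G S"
    and comm: "\<And>s t. s \<in> S \<Longrightarrow> t \<in> S \<Longrightarrow> commutator G s t \<in> N"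
  shows "derived G (carrier G) \<subseteq> N"
proof -
  interpret N: normal N G by (rule N)
  have all_gen: "commutator G g h \<in> N"
    if g: "g \<in> carrier G" and "\<And>s. s \<in> S \<Longrightarrow> commutator G g s \<in> N" and h: "h \<in> carrier G" for g h
  proof -
    have "generate G S \<subseteq> {h \<in> carrier G. commutator G g h \<in> N}"
      using that S by (intro generate_subgroup_incl commutator_mod_normal_subgroup[OF N]) auto
    then show ?thesis using h gen by blast
  qed
  have "commutator G g h \<in> N" if g: "g \<in> carrier G" and h: "h \<in> carrier G" for g h
  proof (rule all_gen[OF g _ h])
    fix s assume s: "s \<in> S"
    have "commutator G s g \<in> N"
      using all_gen s S comm g by blast
    moreover have "commutator G g s = inv (commutator G s g)"
      using s S g by (auto simp: commutator_def m_assoc inv_mult_group)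
    ultimately show "commutator G g s \<in> N" by simp
  qed
  then have "derived_set G (carrier G) \<subseteq> N"
    by (auto simp: commutator_def)
  then show ?thesis
    unfolding derived_def by (rule generate_subgroup_incl[OF _ N.subgroup_axioms])
qed

lemma commutator_pow_conj_left:
  assumes "x \<in> carrier G" "y \<in> carrier G"
  shows "x [^] (a::int) \<otimes> commutator G (x [^] n) (y [^] (m::int)) \<otimes> inv (x [^] a)
       = commutator G (x [^] (a + n)) (y [^] m) \<otimes> inv (commutator G (x [^] a) (y [^] m))"
  using assms by (simp add: int_pow_mult m_assoc inv_mult_group commutator_def)

lemma commutator_pow_conj_right:
  assumes "x \<in> carrier G" "y \<in> carrier G"
  shows "y [^] (b::int) \<otimes> commutator G (x [^] (n::int)) (y [^] m) \<otimes> inv (y [^] b)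
       = inv (commutator G (x [^] n) (y [^] b)) \<otimes> commutator G (x [^] n) (y [^] (b + m))"
  using assms by (simp add: int_pow_mult m_assoc inv_mult_group commutator_def)

end

section \<open>The commutators \<open>w\<^sub>n\<^sub>,\<^sub>m\<close> generate \<open>F\<^sup>(\<^sup>1\<^sup>)\<close>\<close>

lemma commF_eq_commutator: "commF = commutator free_group2"
  by (simp add: fun_eq_iff commF_def commutator_def)

lemma wnm_eq_commutator:
  "wnm n m = commutator free_group2 (gen_x [^]\<^bsub>free_group2\<^esub> n) (gen_y [^]\<^bsub>free_group2\<^esub> m)"
  by (simp add: wnm_def commF_eq_commutator)

lemma wnm_carrier: "wnm n m \<in> carrier free_group2"
  by (simp add: wnm_eq_commutator gen_x_carrier gen_y_carrier)

lemma wnm_eq_one: "n = 0 \<or> m = 0 \<Longrightarrow> wnm n m = \<one>\<^bsub>free_group2\<^esub>"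
  using gen_x_carrier gen_y_carrier by (auto simp: wnm_def commF_def)

definition basic_commutators :: "letter list set" where
  "basic_commutators = {wnm n m | n m. True}"

abbreviation basic_commutator_subgroup :: "letter list set" where
  "basic_commutator_subgroup \<equiv> generate free_group2 basic_commutators"

lemma basic_commutators_subset_carrier: "basic_commutators \<subseteq> carrier free_group2"
  using wnm_carrier by (auto simp: basic_commutators_def)

lemma wnm_in_basic_commutator_subgroup: "wnm n m \<in> basic_commutator_subgroup"
  by (rule generate.incl) (auto simp: basic_commutators_def)

lemma inv_wnm_in_basic_commutator_subgroup: "inv\<^bsub>free_group2\<^esub> (wnm n m) \<in> basic_commutator_subgroup"
  by (rule F.generate_m_inv_closed[OF basic_commutators_subset_carrier wnm_in_basic_commutator_subgroup])

lemma conj_pow_wnm_in_basic_commutator_subgroup: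
  "gen_x [^]\<^bsub>free_group2\<^esub> (a::int) \<otimes>\<^bsub>free_group2\<^esub> wnm n m \<otimes>\<^bsub>free_group2\<^esub>
     inv\<^bsub>free_group2\<^esub> (gen_x [^]\<^bsub>free_group2\<^esub> a) \<in> basic_commutator_subgroup"
  "gen_y [^]\<^bsub>free_group2\<^esub> (b::int) \<otimes>\<^bsub>free_group2\<^esub> wnm n m \<otimes>\<^bsub>free_group2\<^esub>
     inv\<^bsub>free_group2\<^esub> (gen_y [^]\<^bsub>free_group2\<^esub> b) \<in> basic_commutator_subgroup"
  unfolding F.commutator_pow_conj_left[OF gen_x_carrier gen_y_carrier, folded wnm_eq_commutator]
    F.commutator_pow_conj_right[OF gen_x_carrier gen_y_carrier, folded wnm_eq_commutator]
  using wnm_in_basic_commutator_subgroup inv_wnm_in_basic_commutator_subgroup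
  by (simp_all add: generate.eng)

lemma basic_commutator_subgroup_normal: "basic_commutator_subgroup \<lhd> free_group2"
proof (rule F.generate_normal_if_conj_generators[OF basic_commutators_subset_carrier _
      carrier_free_group2_generate])
  show "{gen_x, gen_y} \<subseteq> carrier free_group2"
    by (simp add: gen_x_carrier gen_y_carrier)
  fix s w assume s: "s \<in> {gen_x, gen_y}" and "w \<in> basic_commutators"
  then obtain n m where w: "w = wnm n m" by (auto simp: basic_commutators_def)
  have sc: "s \<in> carrier free_group2" using s gen_x_carrier gen_y_carrier by auto
  have "s = s [^]\<^bsub>free_group2\<^esub> (1::int)" "inv\<^bsub>free_group2\<^esub> s = s [^]\<^bsub>free_group2\<^esub> (-1::int)"
    "s = inv\<^bsub>free_group2\<^esub> (s [^]\<^bsub>free_group2\<^esub> (-1::int))"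
    using sc by (simp_all add: F.int_pow_neg)
  moreover have "s [^]\<^bsub>free_group2\<^esub> (a::int) \<otimes>\<^bsub>free_group2\<^esub> w \<otimes>\<^bsub>free_group2\<^esub>
      inv\<^bsub>free_group2\<^esub> (s [^]\<^bsub>free_group2\<^esub> a) \<in> basic_commutator_subgroup" for a
    using s conj_pow_wnm_in_basic_commutator_subgroup unfolding w by blast
  ultimately show "s \<otimes>\<^bsub>free_group2\<^esub> w \<otimes>\<^bsub>free_group2\<^esub> inv\<^bsub>free_group2\<^esub> s \<in> basic_commutator_subgroup \<and>
      inv\<^bsub>free_group2\<^esub> s \<otimes>\<^bsub>free_group2\<^esub> w \<otimes>\<^bsub>free_group2\<^esub> s \<in> basic_commutator_subgroup"
    by metis
qed

lemma derived_free_group2_subset: "derived free_group2 (carrier free_group2) \<subseteq> basic_commutator_subgroup"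
proof (rule F.derived_subset_if_generators_commute[OF basic_commutator_subgroup_normal _
      carrier_free_group2_generate])
  show "{gen_x, gen_y} \<subseteq> carrier free_group2"
    by (simp add: gen_x_carrier gen_y_carrier)
  have "commutator free_group2 gen_x gen_y = wnm 1 1"
    "commutator free_group2 gen_y gen_x = inv\<^bsub>free_group2\<^esub> (wnm 1 1)"
    "commutator free_group2 s s = \<one>\<^bsub>free_group2\<^esub>" if "s \<in> carrier free_group2" for s
    using gen_x_carrier gen_y_carrier that
    by (simp_all add: wnm_eq_commutator commutator_def F.m_assoc F.inv_mult_group)
  then show "commutator free_group2 s t \<in> basic_commutator_subgroup"
    if "s \<in> {gen_x, gen_y}" "t \<in> {gen_x, gen_y}" for s t
    using that gen_x_carrier gen_y_carrier generate.one[of free_group2 basic_commutators]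
      wnm_in_basic_commutator_subgroup inv_wnm_in_basic_commutator_subgroup by (elim insertE) auto
qed

lemma expr_val_Nil: "expr_val [] = \<one>\<^bsub>free_group2\<^esub>"
  and expr_val_Cons: "expr_val (((n, m), s) # e) = wnm n m [^]\<^bsub>free_group2\<^esub> s \<otimes>\<^bsub>free_group2\<^esub> expr_val e"
  by (simp_all add: expr_val_def)

lemma expr_val_carrier: "expr_val e \<in> carrier free_group2"
  by (induction e) (auto simp: expr_val_Nil expr_val_Cons wnm_carrier)

lemma expr_val_append: "expr_val (e1 @ e2) = expr_val e1 \<otimes>\<^bsub>free_group2\<^esub> expr_val e2"
  by (induction e1) (auto simp: expr_val_Nil expr_val_Cons F.m_assoc expr_val_carrier wnm_carrier)

lemma wnm_pow_has_expr: "\<exists>e. expr_ok e \<and> expr_val e = wnm n m [^]\<^bsub>free_group2\<^esub> (s::int)"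
proof (cases "n = 0 \<or> m = 0 \<or> s = 0")
  case True then show ?thesis
    using wnm_eq_one by (auto intro!: exI[of _ "[]"] simp: expr_ok_def expr_val_Nil)
next
  case False then show ?thesis
    using wnm_carrier
    by (auto intro!: exI[of _ "[((n, m), s)]"] simp: expr_ok_def expr_val_Cons expr_val_Nil)
qed

lemma basic_commutator_subgroup_has_expr:
  "u \<in> basic_commutator_subgroup \<Longrightarrow> \<exists>e. expr_ok e \<and> expr_val e = u"
proof (induction rule: generate.induct)
  case one then show ?case by (auto intro!: exI[of _ "[]"] simp: expr_ok_def expr_val_Nil)
next
  case (incl h)
  then obtain n m where "h = wnm n m" by (auto simp: basic_commutators_def)
  then show ?case using wnm_pow_has_expr[of n m 1] wnm_carrier by simp
next
  case (inv h)
  then obtain n m where "h = wnm n m" by (auto simp: basic_commutators_def)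
  then show ?case using wnm_pow_has_expr[of n m "-1"] wnm_carrier by (simp add: F.int_pow_neg)
next
  case (eng a b)
  then obtain e1 e2 where "expr_ok e1" "expr_val e1 = a" "expr_ok e2" "expr_val e2 = b" by blast
  then show ?case by (auto intro!: exI[of _ "e1 @ e2"] simp: expr_ok_def expr_val_append)
qed

lemma expr_val_shortest_expr:
  assumes "\<exists>e. expr_ok e \<and> expr_val e = w"
  shows "expr_val (shortest_expr w) = w"
proof -
  obtain e where "expr_ok e \<and> expr_val e = w \<and>
      (\<forall>e'. expr_ok e' \<and> expr_val e' = w \<longrightarrow> length e \<le> length e')"
    using ex_has_least_nat[of "\<lambda>e. expr_ok e \<and> expr_val e = w" _ length] assms by blast
  then show ?thesis
    unfolding shortest_expr_def by (rule someI2[where Q = "\<lambda>e. expr_val e = w"]) blast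
qed

section \<open>Diagonal and quarter-turn representations\<close>

definition diag2 :: "complex \<Rightarrow> complex^2^2" where
  "diag2 z = (\<chi> i j. if i = j then (if i = 1 then z else inverse z) else 0)"

definition quarter_turn :: "complex^2^2" where
  "quarter_turn = (\<chi> i j. if i = 1 \<and> j = 2 then 1 else if i = 2 \<and> j = 1 then -1 else 0)"

lemma two_neq_one: "(1::2) \<noteq> 2" "(2::2) \<noteq> 1"
  by auto

lemma diag2_mult: "diag2 a ** diag2 b = diag2 (a * b)"
  by (simp add: diag2_def matrix_matrix_mult_def vec_eq_iff forall_2 sum_2 two_neq_one)

lemma diag2_one: "diag2 1 = mat 1"
  and diag2_minus_one: "diag2 (-1) = - mat 1"
  by (simp_all add: diag2_def mat_def vec_eq_iff forall_2 two_neq_one)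

lemma quarter_turn_diag2: "quarter_turn ** diag2 z = diag2 (inverse z) ** quarter_turn"
  by (simp add: diag2_def quarter_turn_def matrix_matrix_mult_def vec_eq_iff forall_2 sum_2 two_neq_one)

lemma det_diag2: "z \<noteq> 0 \<Longrightarrow> det (diag2 z) = 1"
  and det_quarter_turn: "det quarter_turn = 1"
  by (simp_all add: det_2 diag2_def quarter_turn_def two_neq_one)

lemma matrix_inv_inverse:
  fixes M :: "'a::semiring_1^'n^'n"
  assumes "invertible M"
  shows "M ** matrix_inv M = mat 1" "matrix_inv M ** M = mat 1"
  using someI_ex[OF assms[unfolded invertible_def]] by (simp_all add: matrix_inv_def)

lemma eval_word_Nil: "eval_word [] A B = mat 1"
  and eval_word_Cons: "eval_word (a # t) A B = letter_mat A B a ** eval_word t A B"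
  by (simp_all add: eval_word_def)

lemma eval_word_append: "eval_word (xs @ ys) A B = eval_word xs A B ** eval_word ys A B"
  by (induction xs) (simp_all add: eval_word_Nil eval_word_Cons matrix_mul_lid matrix_mul_assoc)

locale word_rep =
  fixes A B :: "complex^2^2"
  assumes invertible_A: "invertible A" and invertible_B: "invertible B"
begin

abbreviation rep :: "letter list \<Rightarrow> complex^2^2" where
  "rep g \<equiv> eval_word g A B"

lemma letter_mat_inv_letter: "letter_mat A B l ** letter_mat A B (inv_letter l) = mat 1"
  using matrix_inv_inverse[OF invertible_A] matrix_inv_inverse[OF invertible_B]
  by (cases l) (auto simp: letter_mat_def inv_letter_def)

lemma rep_cancel_cons: "rep (cancel_cons a r) = letter_mat A B a ** rep r"
proof (cases r)
  case (Cons b t)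
  show ?thesis
  proof (cases "b = inv_letter a")
    case True
    have "letter_mat A B a ** rep r = (letter_mat A B a ** letter_mat A B b) ** rep t"
      using Cons by (simp add: eval_word_Cons matrix_mul_assoc)
    also have "\<dots> = rep t" using True letter_mat_inv_letter by (simp add: matrix_mul_lid)
    finally show ?thesis using Cons True by (simp add: cancel_cons_def)
  qed (use Cons in \<open>simp add: cancel_cons_def eval_word_Cons\<close>)
qed (simp add: cancel_cons_def eval_word_Cons)

lemma rep_reduce: "rep (reduce xs) = rep xs"
  by (induction xs) (simp_all add: reduce_Cons_cancel_cons rep_cancel_cons eval_word_Cons
      del: reduce.simps(2))

lemma rep_mult: "rep (x \<otimes>\<^bsub>free_group2\<^esub> y) = rep x ** rep y"
  by (simp add: mult_free_group2 rep_reduce eval_word_append)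

lemma rep_one: "rep \<one>\<^bsub>free_group2\<^esub> = mat 1"
  by (simp add: one_free_group2 eval_word_Nil)

lemma rep_inv_eq:
  assumes g: "g \<in> carrier free_group2" and M: "rep g ** M = mat 1"
  shows "rep (inv\<^bsub>free_group2\<^esub> g) = M"
proof -
  have "rep (inv\<^bsub>free_group2\<^esub> g) = rep (inv\<^bsub>free_group2\<^esub> g) ** (rep g ** M)"
    using M by (simp add: matrix_mul_rid)
  also have "\<dots> = rep (inv\<^bsub>free_group2\<^esub> g \<otimes>\<^bsub>free_group2\<^esub> g) ** M"
    by (simp add: rep_mult matrix_mul_assoc)
  also have "\<dots> = M"
    using g by (simp add: rep_one matrix_mul_lid)
  finally show ?thesis .
qed

lemma rep_gen_x: "rep gen_x = A"
  and rep_gen_y: "rep gen_y = B"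
  by (simp_all add: gen_x_def gen_y_def eval_word_Cons eval_word_Nil letter_mat_def matrix_mul_rid)

lemma rep_int_pow_diag2:
  assumes g: "g \<in> carrier free_group2" and rep_g: "rep g = diag2 z" and z: "z \<noteq> 0"
  shows "rep (g [^]\<^bsub>free_group2\<^esub> (n::int)) = diag2 (z powi n)"
proof (induction n rule: int_induct[where k = 0])
  case base then show ?case by (simp add: rep_one diag2_one)
next
  case (step1 i)
  have "g [^]\<^bsub>free_group2\<^esub> (i + 1) = g [^]\<^bsub>free_group2\<^esub> i \<otimes>\<^bsub>free_group2\<^esub> g"
    using g by (simp add: F.int_pow_mult)
  moreover have "z powi (i + 1) = z powi i * z"
    using z by (simp add: power_int_add_1)
  ultimately show ?case
    using step1 by (simp add: rep_mult rep_g diag2_mult)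
next
  case (step2 i)
  have "g [^]\<^bsub>free_group2\<^esub> (i - 1) = g [^]\<^bsub>free_group2\<^esub> i \<otimes>\<^bsub>free_group2\<^esub> inv\<^bsub>free_group2\<^esub> g"
    using g by (simp add: F.int_pow_diff)
  moreover have "rep (inv\<^bsub>free_group2\<^esub> g) = diag2 (inverse z)"
    using g z by (intro rep_inv_eq) (simp_all add: rep_g diag2_mult diag2_one)
  moreover have "z powi (i - 1) = z powi i * inverse z"
    using z by (simp add: power_int_diff divide_inverse)
  ultimately show ?case
    using step2 by (simp add: rep_mult diag2_mult)
qed

lemma rep_inv_inverting_diag2:
  assumes g: "g \<in> carrier free_group2"
    and inverting: "\<And>z. rep g ** diag2 z = diag2 (inverse z) ** rep g"
  shows "rep (inv\<^bsub>free_group2\<^esub> g) ** diag2 z = diag2 (inverse z) ** rep (inv\<^bsub>free_group2\<^esub> g)"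
proof -
  let ?g' = "rep (inv\<^bsub>free_group2\<^esub> g)"
  have inv_g: "rep g ** ?g' = mat 1" "?g' ** rep g = mat 1"
    using g by (simp_all flip: rep_mult add: rep_one)
  have "?g' ** diag2 z = ?g' ** diag2 z ** (rep g ** ?g')"
    using inv_g by (simp add: matrix_mul_rid)
  also have "\<dots> = ?g' ** (diag2 z ** rep g) ** ?g'"
    by (simp add: matrix_mul_assoc)
  also have "diag2 z ** rep g = rep g ** diag2 (inverse z)"
    using inverting[of "inverse z"] by simp
  also have "?g' ** (rep g ** diag2 (inverse z)) ** ?g' = (?g' ** rep g) ** diag2 (inverse z) ** ?g'"
    by (simp add: matrix_mul_assoc)
  also have "\<dots> = diag2 (inverse z) ** ?g'"
    using inv_g by (simp add: matrix_mul_lid)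
  finally show ?thesis .
qed

lemma rep_int_pow_inverting_diag2:
  assumes g: "g \<in> carrier free_group2"
    and inverting: "\<And>z. rep g ** diag2 z = diag2 (inverse z) ** rep g"
  shows "rep (g [^]\<^bsub>free_group2\<^esub> (m::int)) ** diag2 z
       = diag2 (if even m then z else inverse z) ** rep (g [^]\<^bsub>free_group2\<^esub> m)"
proof -
  have mult_inverting: "rep (a \<otimes>\<^bsub>free_group2\<^esub> b) ** diag2 z
      = diag2 (if P then inverse z else z) ** rep (a \<otimes>\<^bsub>free_group2\<^esub> b)"
    if a: "\<And>z. rep a ** diag2 z = diag2 (if P then z else inverse z) ** rep a"
      and b: "\<And>z. rep b ** diag2 z = diag2 (inverse z) ** rep b" for a b P z
  proof -
    have "rep (a \<otimes>\<^bsub>free_group2\<^esub> b) ** diag2 z = (rep a ** diag2 (inverse z)) ** rep b"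
      by (simp add: rep_mult b flip: matrix_mul_assoc)
    also have "\<dots> = diag2 (if P then inverse z else z) ** rep (a \<otimes>\<^bsub>free_group2\<^esub> b)"
      using a[of "inverse z"] by (simp add: rep_mult matrix_mul_assoc)
    finally show ?thesis .
  qed
  show ?thesis
  proof (induction m arbitrary: z rule: int_induct[where k = 0])
    case base then show ?case by (simp add: rep_one matrix_mul_lid matrix_mul_rid)
  next
    case (step1 i)
    have "g [^]\<^bsub>free_group2\<^esub> (i + 1) = g [^]\<^bsub>free_group2\<^esub> i \<otimes>\<^bsub>free_group2\<^esub> g"
      using g by (simp add: F.int_pow_mult)
    then show ?case
      using mult_inverting[OF step1.IH inverting] by simp
  next
    case (step2 i)
    have "g [^]\<^bsub>free_group2\<^esub> (i - 1) = g [^]\<^bsub>free_group2\<^esub> i \<otimes>\<^bsub>free_group2\<^esub> inv\<^bsub>free_group2\<^esub> g"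
      using g by (simp add: F.int_pow_diff)
    then show ?case
      using mult_inverting[OF step2.IH rep_inv_inverting_diag2[OF g inverting]] by simp
  qed
qed

end

locale diagonal_rep =
  fixes lam :: complex
  assumes lam_nonzero: "lam \<noteq> 0"

sublocale diagonal_rep \<subseteq> word_rep "diag2 lam" quarter_turn
  using lam_nonzero by unfold_locales (simp_all add: invertible_det_nz det_diag2 det_quarter_turn)

definition odd_weight :: "((int \<times> int) \<times> int) list \<Rightarrow> int" where
  "odd_weight e = (\<Sum>((n, m), s) \<leftarrow> e. if odd m then n * s else 0)"

context diagonal_rep
begin

lemma rep_wnm: "rep (wnm n m) = diag2 (if even m then 1 else lam powi (2 * n))"
proof -
  define X where "X = gen_x [^]\<^bsub>free_group2\<^esub> n"
  define Y where "Y = gen_y [^]\<^bsub>free_group2\<^esub> m"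
  define u where "u = lam powi n"
  have u: "u \<noteq> 0" using lam_nonzero by (simp add: u_def)
  have XY: "X \<in> carrier free_group2" "Y \<in> carrier free_group2"
    by (simp_all add: X_def Y_def gen_x_carrier gen_y_carrier)
  have rep_X: "rep X = diag2 u"
    unfolding X_def u_def by (rule rep_int_pow_diag2[OF gen_x_carrier rep_gen_x lam_nonzero])
  have rep_inv_X: "rep (inv\<^bsub>free_group2\<^esub> X) = diag2 (inverse u)"
    using XY u by (intro rep_inv_eq) (simp_all add: rep_X diag2_mult diag2_one)
  have "rep Y ** diag2 (inverse u) = diag2 (if even m then inverse u else inverse (inverse u)) ** rep Y"
    unfolding Y_def
    by (rule rep_int_pow_inverting_diag2[OF gen_y_carrier]) (simp add: rep_gen_y quarter_turn_diag2)
  then have Y_diag: "rep Y ** diag2 (inverse u) = diag2 (if even m then inverse u else u) ** rep Y"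
    by simp
  have rep_inv_Y: "rep Y ** rep (inv\<^bsub>free_group2\<^esub> Y) = mat 1"
    using XY by (simp flip: rep_mult add: rep_one)
  have "rep (wnm n m) = rep X ** rep Y ** rep (inv\<^bsub>free_group2\<^esub> X) ** rep (inv\<^bsub>free_group2\<^esub> Y)"
    by (simp add: wnm_def commF_def rep_mult X_def Y_def)
  also have "\<dots> = diag2 u ** (rep Y ** diag2 (inverse u)) ** rep (inv\<^bsub>free_group2\<^esub> Y)"
    by (simp only: rep_X rep_inv_X matrix_mul_assoc)
  also have "\<dots> = diag2 u ** diag2 (if even m then inverse u else u) ** (rep Y ** rep (inv\<^bsub>free_group2\<^esub> Y))"
    by (simp only: Y_diag matrix_mul_assoc)
  also have "\<dots> = diag2 (u * (if even m then inverse u else u))"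
    by (simp only: rep_inv_Y diag2_mult matrix_mul_rid)
  also have "u * (if even m then inverse u else u) = (if even m then 1 else lam powi (2 * n))"
    using u lam_nonzero power_int_add[of lam n n] by (simp add: u_def flip: mult_2)
  finally show ?thesis .
qed

lemma rep_expr_val: "rep (expr_val e) = diag2 (lam powi (2 * odd_weight e))"
proof (induction e)
  case Nil then show ?case by (simp add: expr_val_Nil odd_weight_def rep_one diag2_one)
next
  case (Cons q e)
  obtain n m s where q: "q = ((n, m), s)" by (metis prod.collapse)
  define c where "c = (if even m then 1 else lam powi (2 * n))"
  have c: "c \<noteq> 0" using lam_nonzero by (simp add: c_def)
  have "rep (wnm n m) = diag2 c"
    by (simp add: rep_wnm c_def)
  then have "rep (wnm n m [^]\<^bsub>free_group2\<^esub> s) = diag2 (c powi s)"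
    by (rule rep_int_pow_diag2[OF wnm_carrier _ c])
  then have "rep (expr_val (q # e)) = diag2 (c powi s * lam powi (2 * odd_weight e))"
    by (simp add: q expr_val_Cons rep_mult Cons.IH diag2_mult)
  moreover have "c powi s = lam powi (2 * (if even m then 0 else n * s))"
    by (simp add: c_def power_int_mult mult.assoc)
  ultimately show ?case
    using lam_nonzero by (simp add: q odd_weight_def distrib_left power_int_add)
qed

end

section \<open>\<open>\<Phi>\<^sub>w\<close> at \<open>(1, i)\<close>\<close>

lemma sum_keys_eq_sum_list:
  fixes g :: "'k \<Rightarrow> 'a::comm_ring_1"
  assumes "finite P" "fst ` set E \<subseteq> P"
  shows "(\<Sum>p\<in>P. of_int (sum_list (map snd (filter (\<lambda>q. fst q = p) E))) * g p)
       = (\<Sum>q \<leftarrow> E. of_int (snd q) * g (fst q))"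
  using assms(2)
proof (induction E)
  case (Cons q E)
  have "(\<Sum>p\<in>P. of_int (sum_list (map snd (filter (\<lambda>q'. fst q' = p) (q # E)))) * g p)
     = (\<Sum>p\<in>P. (if fst q = p then of_int (snd q) * g p else 0)
          + of_int (sum_list (map snd (filter (\<lambda>q'. fst q' = p) E))) * g p)"
    by (intro sum.cong) (auto simp: distrib_right)
  also have "\<dots> = of_int (snd q) * g (fst q) + (\<Sum>q \<leftarrow> E. of_int (snd q) * g (fst q))"
    using Cons assms(1) by (simp add: sum.distrib sum.delta)
  finally show ?case by simp
qed simp

lemma minus_one_power_int: "(-1 :: 'a::division_ring) powi n = (if even n then 1 else -1)"
  by (cases "n \<ge> 0") (auto simp: power_int_def even_nat_iff)

lemma Phi_1_i: "Phi w 1 \<i> = 2 * of_int (odd_weight (shortest_expr w))"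
proof -
  define g :: "int \<times> int \<Rightarrow> complex" where "g = (\<lambda>(a, b). if odd b then 2 * of_int a else 0)"
  have "of_int (sgn a) * (1 - \<i> powi (2 * b)) * 1 powi (a - \<bar>a\<bar> + 1) * (\<Sum>k < nat \<bar>a\<bar>. 1 ^ (2 * k))
      = g (a, b)" for a b :: int
  proof -
    have "of_int (sgn a) * of_nat (nat \<bar>a\<bar>) = (of_int a :: complex)"
      by (metis abs_ge_zero int_nat_eq mult.commute of_int_mult of_int_of_nat_eq sgn_mult_abs)
    moreover have "\<i> powi (2 * b) = (-1) powi b"
      by (simp add: power_int_mult)
    ultimately show ?thesis by (simp add: g_def minus_one_power_int)
  qed
  then have "Phi w 1 \<i> = (\<Sum>p\<in>Supp w. of_int (R w (fst p) (snd p)) * g p)"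
    unfolding Phi_def by (intro sum.cong) (auto simp: mult.assoc)
  also have "\<dots> = (\<Sum>q \<leftarrow> shortest_expr w. of_int (snd q) * g (fst q))"
    unfolding Supp_def R_def prod.collapse by (rule sum_keys_eq_sum_list) auto
  also have "\<dots> = 2 * of_int (odd_weight (shortest_expr w))"
  proof -
    have "(\<Sum>q \<leftarrow> E. of_int (snd q) * g (fst q)) = 2 * of_int (odd_weight E)" for E
      by (induction E) (auto simp: odd_weight_def g_def algebra_simps)
    then show ?thesis .
  qed
  finally show ?thesis .
qed

theorem proposition6p5:
  fixes w :: "letter list"
  assumes "w \<in> derived free_group2 (carrier free_group2)"
    and "w \<notin> derived free_group2 (derived free_group2 (carrier free_group2))"
    and "Phi w 1 \<i> \<noteq> 0"
  shows "- mat 1 \<in> {eval_word w A B | A B. A \<in> SL2 \<and> B \<in> SL2}"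
proof -
  define N where "N = odd_weight (shortest_expr w)"
  have "expr_val (shortest_expr w) = w"
    using assms(1) derived_free_group2_subset basic_commutator_subgroup_has_expr
    by (blast intro: expr_val_shortest_expr)
  moreover have "N \<noteq> 0"
    using assms(3) by (simp add: Phi_1_i N_def)
  define lam where "lam = exp (\<i> * pi / of_int (2 * N))"
  interpret diagonal_rep lam
    by unfold_locales (simp add: lam_def)
  have "lam powi (2 * N) = -1"
    using \<open>N \<noteq> 0\<close> by (simp add: lam_def exp_power_int)
  ultimately have "eval_word w (diag2 lam) quarter_turn = - mat 1"
    using rep_expr_val[of "shortest_expr w"] by (simp add: N_def diag2_minus_one)
  moreover have "diag2 lam \<in> SL2" "quarter_turn \<in> SL2"
    by (simp_all add: SL2_def det_diag2 det_quarter_turn lam_def)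
  ultimately show ?thesis by (metis (mono_tags, lifting) mem_Collect_eq)
qed

end
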